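(* Let $k,l,m,n\in\mathbb{N}_0$, let $I\subset\mathbb{R}$ be an interval, and suppose that $F$ is $k$-compatible with $\Pi_n$ of degree $l$ on $I$. Let \[ \mathcal{F}_{m,n}=\{p(x)+F(x)q(x):\ p\in\Pi_m,\ q\in\Pi_n\}, \] considered as functions on $I$. If $k>m$, then every nonzero $f\in\mathcal{F}_{m,n}$ has at most $k+l$ distinct zeros in $I$. If, in addition, $l<n-(k-m)+2$, then every nonzero $f\in\mathcal{F}_{m,n}$ has fewer than $m+n+2$ distinct zeros in $I$.
   Context: $\Pi_n$ denotes the space of real polynomials of degree at most $n$. For $k,n,l\in\mathbb{N}_0$ and an interval $I$, a function $F:I\to\mathbb{R}$ is called $k$-compatible with $\Pi_n$ of degree $l$ on $I$ if: (1) $F\in C^{k+1}(I)$; (2) there is a function $\tilde F:I\to\mathbb{R}$ (depending on $k$ and $n$ but not on $q$) which is monotone on $I$ and satisfies $\tilde F(x)\ne0$ for all $x\in I$, such that for every nonzero $q\in\Pi_n$ there is a function $\tilde q:I\to\mathbb{R}$ with $\frac{d^k}{dx^k}(Fq)=\tilde F\,\tilde q$ on $I$ and $\tilde q$ has at most $l$ distinct zeros in $I$. *)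

theory Defs
  imports "HOL-Analysis.Analysis" "HOL-Computational_Algebra.Polynomial"
begin

definition deriv_chain :: "real set \<Rightarrow> nat \<Rightarrow> (nat \<Rightarrow> real \<Rightarrow> real) \<Rightarrow> bool" where
  "deriv_chain I N D \<longleftrightarrow>
     (\<forall>j<N. \<forall>x\<in>I. (D j has_real_derivative D (Suc j) x) (at x within I))"

definition C_on :: "nat \<Rightarrow> real set \<Rightarrow> (real \<Rightarrow> real) \<Rightarrow> bool" where
  "C_on r I g \<longleftrightarrow>
     (\<exists>D. (\<forall>x\<in>I. D 0 x = g x) \<and> deriv_chain I r D \<and> continuous_on I (D r))"

definition has_kth_deriv_on :: "real set \<Rightarrow> nat \<Rightarrow> (real \<Rightarrow> real) \<Rightarrow> (real \<Rightarrow> real) \<Rightarrow> bool" where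
  "has_kth_deriv_on I k g h \<longleftrightarrow>
     (\<exists>D. (\<forall>x\<in>I. D 0 x = g x) \<and> deriv_chain I k D \<and> (\<forall>x\<in>I. D k x = h x))"

definition compatible :: "nat \<Rightarrow> nat \<Rightarrow> nat \<Rightarrow> real set \<Rightarrow> (real \<Rightarrow> real) \<Rightarrow> bool" where
  "compatible k n l I F \<longleftrightarrow>
     C_on (Suc k) I F \<and>
     (\<exists>Ft. (monotone_on I (\<le>) (\<le>) Ft \<or> monotone_on I (\<le>) (\<ge>) Ft) \<and>
           (\<forall>x\<in>I. Ft x \<noteq> 0) \<and>
           (\<forall>q :: real poly. q \<noteq> 0 \<and> degree q \<le> n \<longrightarrow>
              (\<exists>qt. has_kth_deriv_on I k (\<lambda>x. F x * poly q x) (\<lambda>x. Ft x * qt x) \<and>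
                    finite {x\<in>I. qt x = 0} \<and> card {x\<in>I. qt x = 0} \<le> l)))"

definition Fam :: "nat \<Rightarrow> nat \<Rightarrow> (real \<Rightarrow> real) \<Rightarrow> (real \<Rightarrow> real) set" where
  "Fam m n F = {(\<lambda>x. poly p x + F x * poly q x) | p q :: real poly. degree p \<le> m \<and> degree q \<le> n}"

end

theory Submission
  imports Defs
begin

text \<open>Write \<open>f = p + F q\<close> with \<open>degree p \<le> m\<close>. If \<open>q = 0\<close>, then \<open>f\<close> is a nonzero
  polynomial with at most \<open>m < k\<close> roots. Otherwise \<open>k > m\<close> differentiations annihilate \<open>p\<close>,
  so the \<open>k\<close>-th derivative of \<open>f\<close> is \<open>Ft qt\<close>, which has at most \<open>l\<close> zeros in \<open>I\<close> because
  \<open>Ft\<close> never vanishes. By Rolle's theorem each differentiation loses at most one zero, so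
  \<open>f\<close> has at most \<open>k + l\<close> zeros; the extra hypothesis says exactly \<open>k + l < m + n + 2\<close>.\<close>

lemma Rolle_within_interval:
  fixes g g' :: "real \<Rightarrow> real"
  assumes I: "is_interval I"
    and deriv: "\<And>x. x \<in> I \<Longrightarrow> (g has_real_derivative g' x) (at x within I)"
    and "a \<in> I" "b \<in> I" "a < b" "g a = 0" "g b = 0"
  shows "\<exists>c\<in>{a<..<b}. g' c = 0"
proof -
  have ab_sub: "{a..b} \<subseteq> I"
    using mem_is_interval_1_I[OF I \<open>a \<in> I\<close> \<open>b \<in> I\<close>] by auto
  have "continuous_on I g"
    using deriv by (rule DERIV_continuous_on)
  then have "continuous_on {a..b} g"
    using ab_sub continuous_on_subset by blast
  moreover have "(g has_derivative (\<lambda>v. g' x * v)) (at x)" if "a < x" "x < b" for x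
  proof -
    have "(g has_real_derivative g' x) (at x within {a<..<b})"
      using ab_sub that by (intro DERIV_subset[OF deriv]) auto
    then have "(g has_real_derivative g' x) (at x)"
      using that at_within_open[of x "{a<..<b}"] by simp
    then show ?thesis
      by (simp add: has_field_derivative_def)
  qed
  ultimately obtain c where "a < c" "c < b" "(\<lambda>v. g' c * v) = (\<lambda>v. 0)"
    using Rolle_deriv[OF \<open>a < b\<close>, of g "\<lambda>x v. g' x * v"] \<open>g a = 0\<close> \<open>g b = 0\<close> by auto
  then show ?thesis
    by (metis greaterThanLessThan_iff mult_1_right)
qed

text \<open>The invariant \<open>T \<subseteq> {..<Max S}\<close> keeps the zero of \<open>g'\<close> found beyond \<open>Max S\<close> fresh
  when a new largest zero of \<open>g\<close> is added.\<close>

lemma Rolle_card_zeros_deriv: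
  fixes g g' :: "real \<Rightarrow> real"
  assumes I: "is_interval I"
    and deriv: "\<And>x. x \<in> I \<Longrightarrow> (g has_real_derivative g' x) (at x within I)"
    and "finite S" "S \<subseteq> I" "\<forall>x\<in>S. g x = 0"
  shows "\<exists>T. finite T \<and> T \<subseteq> I \<and> card S \<le> card T + 1 \<and> (\<forall>x\<in>T. g' x = 0)"
proof -
  have "S \<noteq> {} \<longrightarrow> (\<exists>T. finite T \<and> T \<subseteq> I \<and> card S \<le> card T + 1 \<and> (\<forall>x\<in>T. g' x = 0)
      \<and> T \<subseteq> {..<Max S})"
    using \<open>finite S\<close> \<open>S \<subseteq> I\<close> \<open>\<forall>x\<in>S. g x = 0\<close>
  proof (induction rule: finite_linorder_max_induct)
    case empty
    then show ?case by simp
  next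
    case (insert b A)
    show ?case
    proof (cases "A = {}")
      case True
      then show ?thesis by (intro impI exI[of _ "{}"]) simp
    next
      case False
      then obtain T where T: "finite T" "T \<subseteq> I" "card A \<le> card T + 1" "\<forall>x\<in>T. g' x = 0"
        "T \<subseteq> {..<Max A}"
        using insert by auto
      have "Max A \<in> A" "Max A < b"
        using insert.hyps False by auto
      then have "Max A \<in> I" "g (Max A) = 0"
        using insert.prems by auto
      then obtain c where c: "Max A < c" "c < b" "g' c = 0"
        using Rolle_within_interval[OF I deriv, of "Max A" b] \<open>Max A < b\<close> insert.prems by auto
      have "c \<in> I"
        using mem_is_interval_1_I[OF I \<open>Max A \<in> I\<close>, of b c] c(1,2) insert.prems by auto
      moreover have "c \<notin> T"
        using T(5) c(1) by auto
      moreover have "Max (insert b A) = b"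
        using insert.hyps by (simp add: Max_insert2 less_imp_le)
      ultimately show ?thesis
        using T c insert.hyps \<open>Max A < b\<close> by (intro impI exI[of _ "insert c T"]) auto
    qed
  qed
  then show ?thesis
    by (cases "S = {}") (auto intro: exI[of _ "{}"])
qed

lemma Rolle_card_zeros_higher_deriv:
  fixes D :: "nat \<Rightarrow> real \<Rightarrow> real"
  assumes I: "is_interval I"
    and chain: "deriv_chain I k D"
    and "finite S" "S \<subseteq> I" "\<forall>x\<in>S. D 0 x = 0"
  shows "\<exists>T. finite T \<and> T \<subseteq> I \<and> card S \<le> card T + k \<and> (\<forall>x\<in>T. D k x = 0)"
  using chain
proof (induction k)
  case 0
  show ?case
    using assms(3-5) by (intro exI[of _ S]) simp
next
  case (Suc k)
  then have "deriv_chain I k D"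
    by (simp add: deriv_chain_def)
  then obtain T where T: "finite T" "T \<subseteq> I" "card S \<le> card T + k" "\<forall>x\<in>T. D k x = 0"
    using Suc.IH by blast
  have "\<And>x. x \<in> I \<Longrightarrow> (D k has_real_derivative D (Suc k) x) (at x within I)"
    using Suc.prems unfolding deriv_chain_def by blast
  from Rolle_card_zeros_deriv[OF I this T(1,2,4)]
  obtain T' where "finite T'" "T' \<subseteq> I" "card T \<le> card T' + 1" "\<forall>x\<in>T'. D (Suc k) x = 0"
    by blast
  then show ?case
    using T(3) by (intro exI[of _ T']) auto
qed

lemma card_zeros_le_of_higher_deriv:
  fixes f h :: "real \<Rightarrow> real"
  assumes I: "is_interval I"
    and "has_kth_deriv_on I k f h"
    and "finite {x\<in>I. h x = 0}" "card {x\<in>I. h x = 0} \<le> L"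
  shows "finite {x\<in>I. f x = 0} \<and> card {x\<in>I. f x = 0} \<le> k + L"
proof (rule finite_if_finite_subsets_card_bdd)
  obtain D where D0: "\<forall>x\<in>I. D 0 x = f x" and chain: "deriv_chain I k D"
    and Dk: "\<forall>x\<in>I. D k x = h x"
    using assms(2) unfolding has_kth_deriv_on_def by blast
  fix S assume S: "S \<subseteq> {x\<in>I. f x = 0}" "finite S"
  then have "S \<subseteq> I" "\<forall>x\<in>S. D 0 x = 0"
    using D0 by auto
  then obtain T where T: "finite T" "T \<subseteq> I" "card S \<le> card T + k" "\<forall>x\<in>T. D k x = 0"
    using Rolle_card_zeros_higher_deriv[OF I chain S(2)] by blast
  have "T \<subseteq> {x\<in>I. h x = 0}"
    using T(2,4) Dk by fastforce
  then have "card T \<le> L"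
    using le_trans[OF card_mono[OF assms(3)] assms(4)] by blast
  then show "card S \<le> k + L"
    using T(3) by linarith
qed

lemma higher_pderiv_eq_0:
  fixes p :: "'a::{comm_semiring_1,semiring_no_zero_divisors,semiring_char_0} poly"
  assumes "degree p < j"
  shows "(pderiv ^^ j) p = 0"
  by (rule poly_eqI) (use assms in \<open>simp add: coeff_higher_pderiv coeff_eq_0\<close>)

lemma has_kth_deriv_on_add_poly:
  assumes "has_kth_deriv_on I k g h"
  shows "has_kth_deriv_on I k (\<lambda>x. poly p x + g x) (\<lambda>x. poly ((pderiv ^^ k) p) x + h x)"
proof -
  obtain D where D: "\<forall>x\<in>I. D 0 x = g x" "deriv_chain I k D" "\<forall>x\<in>I. D k x = h x"
    using assms unfolding has_kth_deriv_on_def by blast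
  have "((\<lambda>x. poly ((pderiv ^^ j) p) x) has_real_derivative
      poly ((pderiv ^^ Suc j) p) x) (at x within I)" for j x
    using has_field_derivative_at_within[OF poly_DERIV] by simp
  with D(2) have "deriv_chain I k (\<lambda>j x. poly ((pderiv ^^ j) p) x + D j x)"
    unfolding deriv_chain_def by (blast intro: DERIV_add)
  with D(1,3) show ?thesis
    unfolding has_kth_deriv_on_def by (intro exI[of _ "\<lambda>j x. poly ((pderiv ^^ j) p) x + D j x"]) simp
qed

lemma card_zeros_Fam_le:
  assumes I: "is_interval I"
    and "compatible k n l I F"
    and "k > m"
    and "f \<in> Fam m n F" "\<exists>x\<in>I. f x \<noteq> 0"
  shows "finite {x\<in>I. f x = 0} \<and> card {x\<in>I. f x = 0} \<le> k + l"
proof -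
  obtain p q :: "real poly" where f: "f = (\<lambda>x. poly p x + F x * poly q x)"
    and "degree p \<le> m" "degree q \<le> n"
    using assms(4) unfolding Fam_def by blast
  show ?thesis
  proof (cases "q = 0")
    case True
    then have "p \<noteq> 0" and zeros_sub: "{x\<in>I. f x = 0} \<subseteq> {x. poly p x = 0}"
      using f assms(5) by auto
    then have "card {x\<in>I. f x = 0} \<le> degree p"
      using card_mono[OF poly_roots_finite] card_poly_roots_bound[of p] le_trans by blast
    moreover have "finite {x\<in>I. f x = 0}"
      using finite_subset[OF zeros_sub poly_roots_finite[OF \<open>p \<noteq> 0\<close>]] .
    ultimately show ?thesis
      using \<open>degree p \<le> m\<close> \<open>k > m\<close> by linarith
  next
    case False
    obtain Ft where Ft_nonzero: "\<forall>x\<in>I. Ft x \<noteq> 0"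
      and "\<exists>qt. has_kth_deriv_on I k (\<lambda>x. F x * poly q x) (\<lambda>x. Ft x * qt x) \<and>
            finite {x\<in>I. qt x = 0} \<and> card {x\<in>I. qt x = 0} \<le> l"
      using assms(2) False \<open>degree q \<le> n\<close> unfolding compatible_def by blast
    then obtain qt where "has_kth_deriv_on I k (\<lambda>x. F x * poly q x) (\<lambda>x. Ft x * qt x)"
      and qt: "finite {x\<in>I. qt x = 0}" "card {x\<in>I. qt x = 0} \<le> l"
      by blast
    then have "has_kth_deriv_on I k f (\<lambda>x. Ft x * qt x)"
      using has_kth_deriv_on_add_poly[of I k _ _ p] higher_pderiv_eq_0[of p k]
        \<open>degree p \<le> m\<close> \<open>k > m\<close> f by simp
    moreover have "{x\<in>I. Ft x * qt x = 0} = {x\<in>I. qt x = 0}"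
      using Ft_nonzero by auto
    ultimately show ?thesis
      using card_zeros_le_of_higher_deriv[OF I] qt by simp
  qed
qed

theorem proposition1:
  fixes k l m n :: nat and I :: "real set" and F :: "real \<Rightarrow> real"
  assumes "is_interval I"
    and "compatible k n l I F"
    and "k > m"
  shows "(\<forall>f\<in>Fam m n F. (\<exists>x\<in>I. f x \<noteq> 0) \<longrightarrow>
            finite {x\<in>I. f x = 0} \<and> card {x\<in>I. f x = 0} \<le> k + l)
       \<and> (int l < int n - (int k - int m) + 2 \<longrightarrow>
            (\<forall>f\<in>Fam m n F. (\<exists>x\<in>I. f x \<noteq> 0) \<longrightarrow>
               finite {x\<in>I. f x = 0} \<and> card {x\<in>I. f x = 0} < m + n + 2))"
proof (rule conjI; intro impI ballI)
  fix f assume "f \<in> Fam m n F" "\<exists>x\<in>I. f x \<noteq> 0"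
  then show "finite {x\<in>I. f x = 0} \<and> card {x\<in>I. f x = 0} \<le> k + l"
    using card_zeros_Fam_le[OF assms] by blast
next
  fix f assume "int l < int n - (int k - int m) + 2" "f \<in> Fam m n F" "\<exists>x\<in>I. f x \<noteq> 0"
  moreover from this(2,3) have "finite {x\<in>I. f x = 0} \<and> card {x\<in>I. f x = 0} \<le> k + l"
    using card_zeros_Fam_le[OF assms] by blast
  ultimately show "finite {x\<in>I. f x = 0} \<and> card {x\<in>I. f x = 0} < m + n + 2"
    by linarith
qed

end
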